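(* Let $({\cal A},{\cal A}_0)$ be a locally convex quasi *-algebra with identity and topology $\tau$, let $\omega_0$ be a positive linear functional on ${\cal A}_0$ with $\omega_0(a^*a)\le p(a)^2$ for all $a\in{\cal A}_0$ for some $\tau$-continuous seminorm $p$, and let $\omega=\tilde\omega_0$ be its continuous extension to ${\cal A}$, with GNS construction $(\pi_\omega,\lambda_\omega,{\cal H}_\omega)$. If $x\in{\cal A}$ and $\{x_\alpha\}\subset{\cal A}_0$ is a net with $\tau$-$\lim_\alpha x_\alpha=x$, then $\lambda_\omega(x_\alpha)=\lambda_{\omega_0}(x_\alpha)\to\lambda_\omega(x)$ in ${\cal H}_\omega$.
   Context: A locally convex quasi *-algebra $({\cal A},{\cal A}_0)$: ${\cal A}_0$ is a *-algebra with a locally convex topology $\tau$ making the involution and the multiplications $a\mapsto ab$, $a\mapsto ba$ ($b\in{\cal A}_0$) continuous, ${\cal A}$ is the $\tau$-completion, with the involution and the products $ax,xa$ ($a\in{\cal A}$, $x\in{\cal A}_0$) extended by continuity. The functional $\omega$ is representable, and its GNS construction consists of a Hilbert space ${\cal H}_\omega$, a linear map $\lambda_\omega:{\cal A}\to{\cal H}_\omega$ with $\lambda_\omega({\cal A}_0)$ dense and $\langle\lambda_\omega(x),\lambda_\omega(a)\rangle=\omega(a^*x)$ for $x\in{\cal A}$, $a\in{\cal A}_0$, and a *-representation $\pi_\omega$ with domain $\lambda_\omega({\cal A}_0)$ satisfying $\pi_\omega(x)\lambda_\omega(a)=\lambda_\omega(xa)$; $\lambda_{\omega_0}$ denotes the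 GNS map of $\omega_0$ on ${\cal A}_0$, which coincides with $\lambda_\omega$ on ${\cal A}_0$. *)

theory Defs
  imports "HOL-Analysis.Analysis"
begin

text \<open>The distribution has no class of complex vector spaces, so a complex vector space is
  a real vector space together with a real-linear map J (multiplication by the imaginary
  unit) with J (J x) = - x.\<close>

definition complex_structure :: "('v::real_vector \<Rightarrow> 'v) \<Rightarrow> bool" where
  "complex_structure J \<longleftrightarrow> linear J \<and> (\<forall>x. J (J x) = - x)"

definition cscale :: "('v::real_vector \<Rightarrow> 'v) \<Rightarrow> complex \<Rightarrow> 'v \<Rightarrow> 'v" where
  "cscale J c x = Re c *\<^sub>R x + Im c *\<^sub>R J x"

definition csubspace :: "('v::real_vector \<Rightarrow> 'v) \<Rightarrow> 'v set \<Rightarrow> bool" where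
  "csubspace J S \<longleftrightarrow> subspace S \<and> (\<forall>x\<in>S. J x \<in> S)"

definition clinear_map :: "('v::real_vector \<Rightarrow> 'v) \<Rightarrow> ('w::real_vector \<Rightarrow> 'w) \<Rightarrow> ('v \<Rightarrow> 'w) \<Rightarrow> bool" where
  "clinear_map J1 J2 f \<longleftrightarrow> (\<forall>x y. f (x + y) = f x + f y) \<and> (\<forall>c x. f (cscale J1 c x) = cscale J2 c (f x))"

definition clinear_functional :: "('v::real_vector \<Rightarrow> 'v) \<Rightarrow> ('v \<Rightarrow> complex) \<Rightarrow> bool" where
  "clinear_functional J f \<longleftrightarrow> (\<forall>x y. f (x + y) = f x + f y) \<and> (\<forall>c x. f (cscale J c x) = c * f x)"

definition clinear_functional_on :: "('v::real_vector \<Rightarrow> 'v) \<Rightarrow> 'v set \<Rightarrow> ('v \<Rightarrow> complex) \<Rightarrow> bool" where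
  "clinear_functional_on J S f \<longleftrightarrow> (\<forall>x\<in>S. \<forall>y\<in>S. f (x + y) = f x + f y) \<and> (\<forall>c. \<forall>x\<in>S. f (cscale J c x) = c * f x)"

definition seminorm_on :: "('v::real_vector \<Rightarrow> 'v) \<Rightarrow> 'v set \<Rightarrow> ('v \<Rightarrow> real) \<Rightarrow> bool" where
  "seminorm_on J S p \<longleftrightarrow> (\<forall>x\<in>S. \<forall>y\<in>S. p (x + y) \<le> p x + p y) \<and> (\<forall>c. \<forall>x\<in>S. p (cscale J c x) = cmod c * p x)"

text \<open>ip is a complex inner product (linear in the first argument) inducing the norm.
  Together with completeness of the normed type this makes the type a complex Hilbert space.\<close>
definition complex_inner_product :: "('h::real_normed_vector \<Rightarrow> 'h) \<Rightarrow> ('h \<Rightarrow> 'h \<Rightarrow> complex) \<Rightarrow> bool" where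
  "complex_inner_product J ip \<longleftrightarrow>
     complex_structure J \<and>
     (\<forall>x y z. ip (x + y) z = ip x z + ip y z) \<and>
     (\<forall>c x y. ip (cscale J c x) y = c * ip x y) \<and>
     (\<forall>x y. ip y x = cnj (ip x y)) \<and>
     (\<forall>x. ip x x = complex_of_real ((norm x)\<^sup>2))"

text \<open>A family P of seminorms defining the topology; w.l.o.g. P is directed (closed
  under finite maxima up to domination), so continuity can be stated with one seminorm.\<close>

definition directed_seminorms :: "('v \<Rightarrow> real) set \<Rightarrow> bool" where
  "directed_seminorms P \<longleftrightarrow> P \<noteq> {} \<and> (\<forall>p\<in>P. \<forall>q\<in>P. \<exists>r\<in>P. \<forall>x. max (p x) (q x) \<le> r x)"

definition sn_continuous_on :: "('v \<Rightarrow> real) set \<Rightarrow> ('w \<Rightarrow> real) set \<Rightarrow> 'v set \<Rightarrow> ('v \<Rightarrow> 'w) \<Rightarrow> bool" where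
  "sn_continuous_on P Q S f \<longleftrightarrow> (\<forall>q\<in>Q. \<exists>p\<in>P. \<exists>C. \<forall>x\<in>S. q (f x) \<le> C * p x)"

definition sn_continuous_seminorm_on :: "('v \<Rightarrow> real) set \<Rightarrow> 'v set \<Rightarrow> ('v \<Rightarrow> real) \<Rightarrow> bool" where
  "sn_continuous_seminorm_on P S q \<longleftrightarrow> (\<exists>p\<in>P. \<exists>C. \<forall>x\<in>S. q x \<le> C * p x)"

definition sn_continuous_functional :: "('v \<Rightarrow> real) set \<Rightarrow> ('v \<Rightarrow> complex) \<Rightarrow> bool" where
  "sn_continuous_functional P f \<longleftrightarrow> (\<exists>p\<in>P. \<exists>C. \<forall>x. cmod (f x) \<le> C * p x)"

text \<open>convergence of a net (given as a function on an index set with a filter F, e.g. the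
  section filter of a directed set) in the topology of the seminorms P\<close>
definition sn_tendsto :: "('v::real_vector \<Rightarrow> real) set \<Rightarrow> ('i \<Rightarrow> 'v) \<Rightarrow> 'v \<Rightarrow> 'i filter \<Rightarrow> bool" where
  "sn_tendsto P f x F \<longleftrightarrow> (\<forall>p\<in>P. ((\<lambda>i. p (f i - x)) \<longlongrightarrow> 0) F)"

definition sn_cauchy_filter :: "('v::real_vector \<Rightarrow> real) set \<Rightarrow> 'v filter \<Rightarrow> bool" where
  "sn_cauchy_filter P F \<longleftrightarrow> (\<forall>p\<in>P. \<forall>e>0. eventually (\<lambda>(x, y). p (x - y) < e) (F \<times>\<^sub>F F))"

text \<open>The type 'a is the completion A; A0 is a subset of it.  mul x y is the product,
  meaningful when one factor is in A0; star is the involution; e is the identity.\<close>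

definition lc_quasi_star_algebra ::
  "('a::real_vector \<Rightarrow> 'a) \<Rightarrow> 'a set \<Rightarrow> ('a \<Rightarrow> real) set \<Rightarrow> ('a \<Rightarrow> 'a) \<Rightarrow> ('a \<Rightarrow> 'a \<Rightarrow> 'a) \<Rightarrow> 'a \<Rightarrow> bool" where
  "lc_quasi_star_algebra J A0 P star mul e \<longleftrightarrow>
     complex_structure J \<and> csubspace J A0 \<and>
     \<comment> \<open>topology tau: a directed family of seminorms, Hausdorff\<close>
     (\<forall>p\<in>P. seminorm_on J UNIV p) \<and> directed_seminorms P \<and>
     (\<forall>x. (\<forall>p\<in>P. p x = 0) \<longrightarrow> x = 0) \<and>
     \<comment> \<open>A is the tau-completion of A0: complete, with A0 dense\<close>
     (\<forall>F. F \<noteq> bot \<and> sn_cauchy_filter P F \<longrightarrow>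
          (\<exists>x. \<forall>p\<in>P. \<forall>r>0. eventually (\<lambda>y. p (y - x) < r) F)) \<and>
     (\<forall>x. \<forall>p\<in>P. \<forall>r>0. \<exists>a\<in>A0. p (x - a) < r) \<and>
     \<comment> \<open>A0 is a *-algebra with identity e\<close>
     e \<in> A0 \<and>
     (\<forall>a\<in>A0. \<forall>b\<in>A0. mul a b \<in> A0) \<and> (\<forall>a\<in>A0. star a \<in> A0) \<and>
     (\<forall>a\<in>A0. \<forall>b\<in>A0. \<forall>c\<in>A0. mul (mul a b) c = mul a (mul b c)) \<and>
     \<comment> \<open>bilinearity of the products with one factor in A0\<close>
     (\<forall>a\<in>A0. \<forall>x y. mul (x + y) a = mul x a + mul y a \<and> mul a (x + y) = mul a x + mul a y) \<and>
     (\<forall>a\<in>A0. \<forall>c x. mul (cscale J c x) a = cscale J c (mul x a) \<and> mul a (cscale J c x) = cscale J c (mul a x)) \<and>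
     (\<forall>a\<in>A0. \<forall>b\<in>A0. \<forall>x. mul x (a + b) = mul x a + mul x b \<and> mul (a + b) x = mul a x + mul b x) \<and>
     (\<forall>a\<in>A0. \<forall>c x. mul x (cscale J c a) = cscale J c (mul x a) \<and> mul (cscale J c a) x = cscale J c (mul a x)) \<and>
     \<comment> \<open>associativity with one factor in A\<close>
     (\<forall>a\<in>A0. \<forall>b\<in>A0. \<forall>x. mul x (mul a b) = mul (mul x a) b \<and>
                          mul (mul a b) x = mul a (mul b x) \<and>
                          mul (mul a x) b = mul a (mul x b)) \<and>
     \<comment> \<open>identity\<close>
     (\<forall>x. mul e x = x \<and> mul x e = x) \<and>
     \<comment> \<open>involution on A: conjugate linear, involutive, anti-multiplicative\<close>
     (\<forall>x. star (star x) = x) \<and> (\<forall>x y. star (x + y) = star x + star y) \<and>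
     (\<forall>c x. star (cscale J c x) = cscale J (cnj c) (star x)) \<and>
     (\<forall>a\<in>A0. \<forall>x. star (mul a x) = mul (star x) (star a) \<and> star (mul x a) = mul (star a) (star x)) \<and>
     \<comment> \<open>tau-continuity of the involution and of the multiplications by elements of A0
        (on A, i.e. the operations on A are the continuous extensions)\<close>
     sn_continuous_on P P UNIV star \<and>
     (\<forall>b\<in>A0. sn_continuous_on P P UNIV (\<lambda>x. mul x b) \<and> sn_continuous_on P P UNIV (\<lambda>x. mul b x))"

definition cpos :: "complex \<Rightarrow> bool" where
  "cpos z \<longleftrightarrow> Im z = 0 \<and> 0 \<le> Re z"

definition representable ::
  "'a set \<Rightarrow> ('a \<Rightarrow> 'a) \<Rightarrow> ('a \<Rightarrow> 'a \<Rightarrow> 'a) \<Rightarrow> ('a \<Rightarrow> complex) \<Rightarrow> bool" where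
  "representable A0 star mul \<omega> \<longleftrightarrow>
     (\<forall>a\<in>A0. cpos (\<omega> (mul (star a) a))) \<and>
     (\<forall>a\<in>A0. \<forall>b\<in>A0. \<forall>x. \<omega> (mul (mul (star b) x) a) = cnj (\<omega> (mul (mul (star a) (star x)) b))) \<and>
     (\<forall>x. \<exists>\<gamma>>0. \<forall>a\<in>A0. cmod (\<omega> (mul (star x) a)) \<le> \<gamma> * sqrt (Re (\<omega> (mul (star a) a))))"

definition GNS_construction ::
  "('a::real_vector \<Rightarrow> 'a) \<Rightarrow> 'a set \<Rightarrow> ('a \<Rightarrow> 'a) \<Rightarrow> ('a \<Rightarrow> 'a \<Rightarrow> 'a) \<Rightarrow> ('a \<Rightarrow> complex)
   \<Rightarrow> ('h::{real_normed_vector, complete_space} \<Rightarrow> 'h) \<Rightarrow> ('h \<Rightarrow> 'h \<Rightarrow> complex) \<Rightarrow> ('a \<Rightarrow> 'h) \<Rightarrow> ('a \<Rightarrow> 'h \<Rightarrow> 'h) \<Rightarrow> bool" where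
  "GNS_construction J A0 star mul \<omega> JH ip lam repr \<longleftrightarrow>
     complex_inner_product JH ip \<and>
     clinear_map J JH lam \<and>
     closure (lam ` A0) = UNIV \<and>
     (\<forall>x. \<forall>a\<in>A0. ip (lam x) (lam a) = \<omega> (mul (star a) x)) \<and>
     (\<forall>x. \<forall>a\<in>A0. repr x (lam a) = lam (mul x a))"

end

theory Submission imports Defs begin

text \<open>By the GNS identity \<open>\<parallel>\<lambda>(b)\<parallel>\<^sup>2 = \<omega>\<^sub>0(b\<^sup>*b) \<le> p(b)\<^sup>2\<close> for \<open>b \<in> A\<^sub>0\<close> and the
  \<open>\<tau>\<close>-continuity of \<open>p\<close>, the net \<open>\<lambda>(x\<^sub>\<alpha>)\<close> is Cauchy and converges to some \<open>h\<close> in the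
  Hilbert space.  On the other hand \<open>\<langle>\<lambda>(x\<^sub>\<alpha>), \<lambda>(a)\<rangle> = \<omega>(a\<^sup>* x\<^sub>\<alpha>) \<rightarrow> \<omega>(a\<^sup>* x) = \<langle>\<lambda>(x), \<lambda>(a)\<rangle>\<close>
  for every \<open>a \<in> A\<^sub>0\<close> by continuity of \<open>\<omega>\<close> and of the left multiplication, so \<open>h - \<lambda>(x)\<close> is
  orthogonal to the dense set \<open>\<lambda>(A\<^sub>0)\<close> and \<open>h = \<lambda>(x)\<close>.\<close>

lemma seminorm_on_minus:
  assumes "seminorm_on J S p" "y \<in> S"
  shows "p (- y) = p y"
proof -
  have "cscale J (-1) y = - y" by (simp add: cscale_def)
  then show ?thesis using assms unfolding seminorm_on_def by (metis norm_minus_cancel norm_one mult_1)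
qed

lemma seminorm_on_nonneg:
  assumes "seminorm_on J S p" "subspace S" "y \<in> S"
  shows "0 \<le> p y"
proof -
  have "0 \<in> S" "- y \<in> S" using assms(2,3) by (auto simp: subspace_neg subspace_0)
  have "cscale J 0 0 = 0" by (simp add: cscale_def)
  then have "p 0 = 0" using assms(1) \<open>0 \<in> S\<close> unfolding seminorm_on_def by (metis norm_zero mult_zero_left)
  moreover have "p (y + - y) \<le> p y + p (- y)" using assms(1,3) \<open>- y \<in> S\<close> unfolding seminorm_on_def by blast
  ultimately show ?thesis using seminorm_on_minus[OF assms(1,3)] by simp
qed

lemma seminorm_on_diff_le:
  assumes "seminorm_on J UNIV p"
  shows "p (u - v) \<le> p (u - x) + p (v - x)"
proof -
  have "p ((u - x) + - (v - x)) \<le> p (u - x) + p (- (v - x))"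
    using assms unfolding seminorm_on_def by blast
  moreover have "p (- (v - x)) = p (v - x)" by (rule seminorm_on_minus[OF assms UNIV_I])
  ultimately show ?thesis by (simp add: diff_add_eq_diff_diff_swap)
qed

lemma complex_inner_product_Re_polar:
  assumes "complex_inner_product JH ip"
  shows "Re (ip u v) = ((norm (u + v))\<^sup>2 - (norm u)\<^sup>2 - (norm v)\<^sup>2) / 2"
proof -
  have add: "\<And>x y z. ip (x + y) z = ip x z + ip y z" and sym: "\<And>x y. ip y x = cnj (ip x y)"
    and norm: "\<And>x. ip x x = complex_of_real ((norm x)\<^sup>2)"
    using assms unfolding complex_inner_product_def by blast+
  have add_right: "\<And>x y z. ip x (y + z) = ip x y + ip x z" by (metis add sym complex_cnj_add)
  have "Re (ip (u + v) (u + v)) = Re (ip u u) + Re (ip u v) + Re (ip v u) + Re (ip v v)"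
    by (simp add: add add_right)
  moreover have "Re (ip v u) = Re (ip u v)" using sym[of u v] by simp
  ultimately show ?thesis by (simp add: norm)
qed

lemma tendsto_Re_complex_inner_product:
  assumes "complex_inner_product JH ip" "(f \<longlongrightarrow> u) F" "(g \<longlongrightarrow> v) F"
  shows "((\<lambda>i. Re (ip (f i) (g i))) \<longlongrightarrow> Re (ip u v)) F"
  unfolding complex_inner_product_Re_polar[OF assms(1)] by (intro tendsto_intros assms(2,3)) simp

lemma complex_inner_product_eq_if_dense:
  assumes ip: "complex_inner_product JH ip" and dense: "closure D = UNIV"
    and eq: "\<forall>v\<in>D. Re (ip u v) = Re (ip w v)"
  shows "u = w"
proof -
  have add: "\<And>x y z. ip (x + y) z = ip x z + ip y z" and norm: "\<And>x. ip x x = complex_of_real ((norm x)\<^sup>2)"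
    using ip unfolding complex_inner_product_def by blast+
  have orth: "Re (ip (u - w) v) = Re (ip u v) - Re (ip w v)" for v
    using add[of "u - w" w v] by simp
  have "closed {v. Re (ip (u - w) v) = 0}"
    unfolding complex_inner_product_Re_polar[OF ip] by (intro closed_Collect_eq continuous_intros) simp
  then have "closure D \<subseteq> {v. Re (ip (u - w) v) = 0}"
    using eq orth by (intro closure_minimal) auto
  then have "Re (ip (u - w) (u - w)) = 0" using dense by blast
  then show ?thesis by (simp add: norm)
qed

lemma sn_tendsto_functional:
  assumes f: "Modules.additive f" and cont: "sn_continuous_functional P f" and lim: "sn_tendsto P xa x F"
  shows "((\<lambda>i. f (xa i)) \<longlongrightarrow> f x) F"
proof -
  obtain p C where "p \<in> P" and bound: "\<forall>y. cmod (f y) \<le> C * p y"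
    using cont unfolding sn_continuous_functional_def by blast
  then have "((\<lambda>i. p (xa i - x)) \<longlongrightarrow> 0) F" using lim unfolding sn_tendsto_def by blast
  then have small: "((\<lambda>i. C * p (xa i - x)) \<longlongrightarrow> 0) F" by (rule tendsto_mult_right_zero)
  have "eventually (\<lambda>i. norm (f (xa i - x)) \<le> C * p (xa i - x)) F"
    using bound by (simp add: always_eventually)
  then have "((\<lambda>i. f (xa i - x)) \<longlongrightarrow> 0) F" using small by (rule Lim_null_comparison)
  then show ?thesis by (simp add: additive.diff[OF f] LIM_zero_iff)
qed

lemma sn_tendsto_continuous_on:
  assumes g: "Modules.additive g" and cont: "sn_continuous_on P Q UNIV g"
    and Q_nonneg: "\<forall>q\<in>Q. \<forall>y. 0 \<le> q y" and lim: "sn_tendsto P xa x F"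
  shows "sn_tendsto Q (\<lambda>i. g (xa i)) (g x) F"
  unfolding sn_tendsto_def
proof
  fix q assume "q \<in> Q"
  then obtain p C where "p \<in> P" and bound: "\<forall>y. q (g y) \<le> C * p y"
    using cont unfolding sn_continuous_on_def by blast
  then have "((\<lambda>i. p (xa i - x)) \<longlongrightarrow> 0) F" using lim unfolding sn_tendsto_def by blast
  then have small: "((\<lambda>i. C * p (xa i - x)) \<longlongrightarrow> 0) F" by (rule tendsto_mult_right_zero)
  have "\<forall>i. q (g (xa i) - g x) \<le> C * p (xa i - x)"
    using bound by (simp add: additive.diff[OF g, symmetric])
  moreover have "\<forall>i. 0 \<le> q (g (xa i) - g x)" using Q_nonneg \<open>q \<in> Q\<close> by blast
  ultimately show "((\<lambda>i. q (g (xa i) - g x)) \<longlongrightarrow> 0) F"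
    by (intro tendsto_sandwich[OF _ _ tendsto_const small] always_eventually)
qed

text \<open>Only the existence of a limit is claimed: the bound holds on the subspace alone, so
  nothing yet relates the limit to the image of \<open>x\<close>.\<close>

lemma sn_bounded_additive_convergent:
  fixes f :: "'a::real_vector \<Rightarrow> 'h::{real_normed_vector, complete_space}"
  assumes f: "Modules.additive f" and q: "seminorm_on J UNIV q" and S: "subspace S"
    and bound: "\<forall>b\<in>S. norm (f b) \<le> C * q b"
    and xa_S: "\<forall>i. xa i \<in> S" and lim: "((\<lambda>i. q (xa i - x)) \<longlongrightarrow> 0) F"
  obtains h where "((\<lambda>i. f (xa i)) \<longlongrightarrow> h) F"
proof (cases "F = bot")
  case False
  have cauchy: "cauchy_filter (filtermap (\<lambda>i. f (xa i)) F)"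
    unfolding cauchy_filter_metric_filtermap
  proof (intro allI impI)
    fix e :: real assume "e > 0"
    define d where "d = e / (2 * (\<bar>C\<bar> + 1))"
    have "d > 0" using \<open>e > 0\<close> by (simp add: d_def add_pos_nonneg)
    have "dist (f (xa i)) (f (xa j)) < e" if "q (xa i - x) < d" "q (xa j - x) < d" for i j
    proof -
      have "xa i - xa j \<in> S" using xa_S S by (simp add: subspace_diff)
      then have "dist (f (xa i)) (f (xa j)) \<le> C * q (xa i - xa j)"
        using bound by (simp add: dist_norm additive.diff[OF f, symmetric])
      also have "\<dots> \<le> \<bar>C\<bar> * q (xa i - xa j)"
        using seminorm_on_nonneg[OF q subspace_UNIV UNIV_I] by (simp add: mult_right_mono)
      also have "\<dots> \<le> \<bar>C\<bar> * (2 * d)"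
        using seminorm_on_diff_le[OF q, of "xa i" "xa j" x] that by (intro mult_left_mono) auto
      also have "\<dots> < e" using \<open>e > 0\<close> unfolding d_def by (simp add: field_simps)
      finally show ?thesis .
    qed
    moreover have "eventually (\<lambda>i. q (xa i - x) < d) F"
      using order_tendstoD(2)[OF lim \<open>d > 0\<close>] .
    ultimately show "\<exists>Q. eventually Q F \<and> (\<forall>i j. Q i \<and> Q j \<longrightarrow> dist (f (xa i)) (f (xa j)) < e)"
      by blast
  qed
  have "filtermap (\<lambda>i. f (xa i)) F \<noteq> bot" using False by (simp add: filtermap_bot_iff)
  then obtain h where "filtermap (\<lambda>i. f (xa i)) F \<le> nhds h"
    using cauchy_filter_complete_converges[OF cauchy complete_UNIV] by (auto simp: principal_UNIV)
  then show ?thesis using that by (simp add: filterlim_def)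
qed (use that in simp)

lemma lc_quasi_star_algebraD:
  assumes "lc_quasi_star_algebra J A0 P star mul e"
  shows "subspace A0" and "\<forall>q\<in>P. seminorm_on J UNIV q"
    and "\<forall>a\<in>A0. \<forall>b\<in>A0. mul a b \<in> A0" and "\<forall>a\<in>A0. star a \<in> A0"
    and "\<forall>a\<in>A0. Modules.additive (mul a)" and "\<forall>a\<in>A0. sn_continuous_on P P UNIV (mul a)"
  using assms unfolding lc_quasi_star_algebra_def csubspace_def by (simp_all add: additive.intro)

lemma GNS_constructionD:
  assumes "GNS_construction J A0 star mul \<omega> JH ip lam repr"
  shows "complex_inner_product JH ip" and "Modules.additive lam" and "closure (lam ` A0) = UNIV"
    and "\<forall>y. \<forall>a\<in>A0. ip (lam y) (lam a) = \<omega> (mul (star a) y)"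
  using assms unfolding GNS_construction_def clinear_map_def by (simp_all add: additive.intro)

lemma GNS_norm_le_seminorm:
  assumes alg: "lc_quasi_star_algebra J A0 P star mul e"
    and GNS: "GNS_construction J A0 star mul \<omega> JH ip lam repr"
    and \<omega>_ext: "\<forall>a\<in>A0. \<omega> a = \<omega>0 a"
    and p_sn: "seminorm_on J A0 p"
    and \<omega>0_bound: "\<forall>a\<in>A0. Re (\<omega>0 (mul (star a) a)) \<le> (p a)\<^sup>2"
    and b: "b \<in> A0"
  shows "norm (lam b) \<le> p b"
proof -
  have "mul (star b) b \<in> A0" using lc_quasi_star_algebraD(3,4)[OF alg] b by blast
  then have "ip (lam b) (lam b) = \<omega>0 (mul (star b) b)" using GNS_constructionD(4)[OF GNS] b \<omega>_ext by simp
  moreover have "ip (lam b) (lam b) = complex_of_real ((norm (lam b))\<^sup>2)"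
    using GNS_constructionD(1)[OF GNS] unfolding complex_inner_product_def by blast
  ultimately have "(norm (lam b))\<^sup>2 = Re (\<omega>0 (mul (star b) b))" by (metis Re_complex_of_real)
  also have "\<dots> \<le> (p b)\<^sup>2" using \<omega>0_bound b by blast
  finally show ?thesis
    using seminorm_on_nonneg[OF p_sn lc_quasi_star_algebraD(1)[OF alg] b] by (rule power2_le_imp_le)
qed

lemma GNS_tendsto_inner:
  assumes alg: "lc_quasi_star_algebra J A0 P star mul e"
    and GNS: "GNS_construction J A0 star mul \<omega> JH ip lam repr"
    and \<omega>_lin: "clinear_functional J \<omega>" and \<omega>_cont: "sn_continuous_functional P \<omega>"
    and lim: "sn_tendsto P xa x F" and a: "a \<in> A0"
  shows "((\<lambda>i. ip (lam (xa i)) (lam a)) \<longlongrightarrow> ip (lam x) (lam a)) F"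
proof -
  note alg_facts = lc_quasi_star_algebraD[OF alg]
  have P_nonneg: "\<forall>q\<in>P. \<forall>y. 0 \<le> q y"
    using alg_facts(2) seminorm_on_nonneg[OF _ subspace_UNIV UNIV_I] by blast
  have \<omega>_add: "Modules.additive \<omega>"
    using \<omega>_lin unfolding clinear_functional_def by (simp add: additive.intro)
  have "star a \<in> A0" using alg_facts(4) a by blast
  then have "sn_tendsto P (\<lambda>i. mul (star a) (xa i)) (mul (star a) x) F"
    using alg_facts(5,6) sn_tendsto_continuous_on[OF _ _ P_nonneg lim] by blast
  then have "((\<lambda>i. \<omega> (mul (star a) (xa i))) \<longlongrightarrow> \<omega> (mul (star a) x)) F"
    by (rule sn_tendsto_functional[OF \<omega>_add \<omega>_cont])
  then show ?thesis using GNS_constructionD(4)[OF GNS] a by simp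
qed

theorem lemma9:
  fixes J :: "'a::real_vector \<Rightarrow> 'a" and A0 :: "'a set" and P :: "('a \<Rightarrow> real) set"
    and star :: "'a \<Rightarrow> 'a" and mul :: "'a \<Rightarrow> 'a \<Rightarrow> 'a" and e :: 'a
    and \<omega>0 \<omega> :: "'a \<Rightarrow> complex" and p :: "'a \<Rightarrow> real"
    and JH :: "'h::{real_normed_vector, complete_space} \<Rightarrow> 'h"
    and ip :: "'h \<Rightarrow> 'h \<Rightarrow> complex" and lam :: "'a \<Rightarrow> 'h" and repr :: "'a \<Rightarrow> 'h \<Rightarrow> 'h"
    and x :: 'a and xa :: "'i \<Rightarrow> 'a" and F :: "'i filter"
  assumes alg: "lc_quasi_star_algebra J A0 P star mul e"
    and \<omega>0_lin: "clinear_functional_on J A0 \<omega>0"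
    and \<omega>0_pos: "\<forall>a\<in>A0. cpos (\<omega>0 (mul (star a) a))"
    and p_sn: "seminorm_on J A0 p"
    and p_cont: "sn_continuous_seminorm_on P A0 p"
    and \<omega>0_bound: "\<forall>a\<in>A0. Re (\<omega>0 (mul (star a) a)) \<le> (p a)\<^sup>2"
    and \<omega>_lin: "clinear_functional J \<omega>"
    and \<omega>_cont: "sn_continuous_functional P \<omega>"
    and \<omega>_ext: "\<forall>a\<in>A0. \<omega> a = \<omega>0 a"
    and \<omega>_repr: "representable A0 star mul \<omega>"
    and GNS: "GNS_construction J A0 star mul \<omega> JH ip lam repr"
    and xa_A0: "\<forall>i. xa i \<in> A0"
    and lim: "sn_tendsto P xa x F"
  shows "((\<lambda>i. lam (xa i)) \<longlongrightarrow> lam x) F"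
proof (cases "F = bot")
  case False
  note GNS_facts = GNS_constructionD[OF GNS]
  obtain q C where "q \<in> P" and "\<forall>b\<in>A0. p b \<le> C * q b"
    using p_cont unfolding sn_continuous_seminorm_on_def by blast
  then have "\<forall>b\<in>A0. norm (lam b) \<le> C * q b"
    using GNS_norm_le_seminorm[OF alg GNS \<omega>_ext p_sn \<omega>0_bound] by (blast intro: order.trans)
  moreover have "((\<lambda>i. q (xa i - x)) \<longlongrightarrow> 0) F" using lim \<open>q \<in> P\<close> unfolding sn_tendsto_def by blast
  ultimately obtain h where h: "((\<lambda>i. lam (xa i)) \<longlongrightarrow> h) F"
    using sn_bounded_additive_convergent[OF GNS_facts(2) _ lc_quasi_star_algebraD(1)[OF alg] _ xa_A0]
      lc_quasi_star_algebraD(2)[OF alg] \<open>q \<in> P\<close> by blast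
  have "Re (ip h (lam a)) = Re (ip (lam x) (lam a))" if "a \<in> A0" for a
  proof -
    have "((\<lambda>i. Re (ip (lam (xa i)) (lam a))) \<longlongrightarrow> Re (ip (lam x) (lam a))) F"
      using GNS_tendsto_inner[OF alg GNS \<omega>_lin \<omega>_cont lim that] by (rule tendsto_Re)
    moreover have "((\<lambda>i. Re (ip (lam (xa i)) (lam a))) \<longlongrightarrow> Re (ip h (lam a))) F"
      using tendsto_Re_complex_inner_product[OF GNS_facts(1) h tendsto_const] .
    ultimately show ?thesis using tendsto_unique[OF False] by blast
  qed
  then have "h = lam x"
    using complex_inner_product_eq_if_dense[OF GNS_facts(1,3)] by blast
  with h show ?thesis by simp
qed simp

end
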